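(* Suppose that $$\forall\,\varepsilon>0\;\exists\,\delta>0\ \text{such that}\ j(\varphi,\psi)\le\varepsilon\ \ \forall\,(\varphi,\psi)\in U_+\ \text{with}\ \|\varphi\|_0\le\delta ,$$ and that $j(\varphi,0)>0$ whenever $\varphi$ is a strictly positive constant function. Then for every solution $x=(w,v)^\phi$, $\phi\in X_+$, of $w'(t)=q(v(t))w(t)$, $v'(t)=j(w_t,v_t)-\mu v(t)$ one has $x_t\to0$ as $t\to\infty$ in both the $C$-norm and the $C^1$-norm.
   Context: Let $h>0$, $R_-<0$, $I=(R_-,\infty)$, $q:I\to\mathbb{R}$, $\mu>0$, $U=C^1([-h,0],\mathbb{R})\times C^1([-h,0],I)$, $j:U\to\mathbb{R}$, $U_+=C^1([-h,0],\mathbb{R}_+^2)$, $\|\cdot\|_0$ the sup-norm, $\|\phi\|_1=\|\phi\|_0+\|\phi'\|_0$; $x_t(s)=x(t+s)$. Define $F(\varphi,\psi)=(q(\psi(0))\varphi(0),\,j(\varphi,\psi)-\mu\psi(0))$ and $X_+=\{\phi\in C^1([-h,0],\mathbb{R}_+^2):\phi'(0)=F(\phi)\}\neq\emptyset$. Assume: $j$ is $C^1$ on $U$ with each derivative extending to a linear map on $C([-h,0],\mathbb{R}^2)$ depending continuously on $(\phi,\chi)$; for every bounded $B\subset U_+$ there is $L_B$ with $|j(\phi)-j(\chi)|\le L_B\|\phi-\chi\|_0$ on $B$; $j\ge0$ on $U_+$; $j(B_1\times B_2)$ is bounded whenever $B_1\times B_2\subset U_+$ with $B_1$ bounded; $q$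 is bounded and $C^1$; and $q(s)<0$ for all $s>0$. Solutions from $X_+$ exist globally and remain nonnegative. *)

theory Defs
  imports "HOL-Analysis.Analysis"
begin

text \<open>History segments are functions real => real, of which only the values
on [-h,0] matter.  Pairs (phi,psi) of segments are the two components of an
R^2-valued segment.\<close>

definition C1h :: "real \<Rightarrow> (real \<Rightarrow> real) \<Rightarrow> bool" where
  "C1h h f \<longleftrightarrow> (\<exists>d. (\<forall>s\<in>{-h..0}. (f has_real_derivative d s) (at s within {-h..0}))
                   \<and> continuous_on {-h..0} d)"

definition derh :: "real \<Rightarrow> (real \<Rightarrow> real) \<Rightarrow> real \<Rightarrow> real" where
  "derh h f s = (SOME d. (f has_real_derivative d) (at s within {-h..0}))"

definition norm0 :: "real \<Rightarrow> (real \<Rightarrow> real) \<Rightarrow> real" where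
  "norm0 h f = (SUP s\<in>{-h..0}. \<bar>f s\<bar>)"

definition norm1 :: "real \<Rightarrow> (real \<Rightarrow> real) \<Rightarrow> real" where
  "norm1 h f = norm0 h f + norm0 h (derh h f)"

definition pnorm0 :: "real \<Rightarrow> (real \<Rightarrow> real) \<Rightarrow> (real \<Rightarrow> real) \<Rightarrow> real" where
  "pnorm0 h f g = max (norm0 h f) (norm0 h g)"

definition pnorm1 :: "real \<Rightarrow> (real \<Rightarrow> real) \<Rightarrow> (real \<Rightarrow> real) \<Rightarrow> real" where
  "pnorm1 h f g = max (norm1 h f) (norm1 h g)"

definition seg :: "(real \<Rightarrow> real) \<Rightarrow> real \<Rightarrow> (real \<Rightarrow> real)" where
  "seg x t = (\<lambda>s. x (t + s))"

definition U :: "real \<Rightarrow> real \<Rightarrow> ((real \<Rightarrow> real) \<times> (real \<Rightarrow> real)) set" where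
  "U h Rm = {(f, g). C1h h f \<and> C1h h g \<and> (\<forall>s\<in>{-h..0}. g s > Rm)}"

definition Uplus :: "real \<Rightarrow> ((real \<Rightarrow> real) \<times> (real \<Rightarrow> real)) set" where
  "Uplus h = {(f, g). C1h h f \<and> C1h h g \<and> (\<forall>s\<in>{-h..0}. f s \<ge> 0 \<and> g s \<ge> 0)}"

definition Xplus :: "real \<Rightarrow> real \<Rightarrow> (real \<Rightarrow> real) \<Rightarrow> real
    \<Rightarrow> ((real \<Rightarrow> real) \<Rightarrow> (real \<Rightarrow> real) \<Rightarrow> real) \<Rightarrow> ((real \<Rightarrow> real) \<times> (real \<Rightarrow> real)) set" where
  "Xplus h Rm q \<mu> j = {(f, g). (f, g) \<in> Uplus h \<and>
       derh h f 0 = q (g 0) * f 0 \<and> derh h g 0 = j f g - \<mu> * g 0}"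

definition bounded1 :: "real \<Rightarrow> ((real \<Rightarrow> real) \<times> (real \<Rightarrow> real)) set \<Rightarrow> bool" where
  "bounded1 h B \<longleftrightarrow> (\<exists>M. \<forall>(f, g)\<in>B. pnorm1 h f g \<le> M)"

definition bounded1s :: "real \<Rightarrow> (real \<Rightarrow> real) set \<Rightarrow> bool" where
  "bounded1s h B \<longleftrightarrow> (\<exists>M. \<forall>f\<in>B. norm1 h f \<le> M)"

definition j_extensional :: "real \<Rightarrow> ((real \<Rightarrow> real) \<Rightarrow> (real \<Rightarrow> real) \<Rightarrow> real) \<Rightarrow> bool" where
  "j_extensional h j \<longleftrightarrow> (\<forall>f g f' g'. (\<forall>s\<in>{-h..0}. f s = f' s \<and> g s = g' s) \<longrightarrow> j f g = j f' g')"

definition j_C1_ext :: "real \<Rightarrow> real \<Rightarrow> ((real \<Rightarrow> real) \<Rightarrow> (real \<Rightarrow> real) \<Rightarrow> real) \<Rightarrow> bool" where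
  "j_C1_ext h Rm j \<longleftrightarrow> (\<exists>Dj :: (real \<Rightarrow> real) \<Rightarrow> (real \<Rightarrow> real) \<Rightarrow> (real \<Rightarrow> real) \<Rightarrow> (real \<Rightarrow> real) \<Rightarrow> real.
     \<comment> \<open>Dj(f,g) only depends on values on [-h,0]\<close>
     (\<forall>(f, g)\<in>U h Rm. \<forall>a b a' b'. (\<forall>s\<in>{-h..0}. a s = a' s \<and> b s = b' s) \<longrightarrow> Dj f g a b = Dj f g a' b') \<and>
     \<comment> \<open>Dj(f,g) is linear on C([-h,0],R^2)\<close>
     (\<forall>(f, g)\<in>U h Rm. \<forall>a b a' b' c. continuous_on {-h..0} a \<and> continuous_on {-h..0} b \<and>
         continuous_on {-h..0} a' \<and> continuous_on {-h..0} b' \<longrightarrow>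
         Dj f g (\<lambda>s. a s + a' s) (\<lambda>s. b s + b' s) = Dj f g a b + Dj f g a' b' \<and>
         Dj f g (\<lambda>s. c * a s) (\<lambda>s. c * b s) = c * Dj f g a b) \<and>
     \<comment> \<open>Dj(f,g) is bounded on C([-h,0],R^2)\<close>
     (\<forall>(f, g)\<in>U h Rm. \<exists>K. \<forall>a b. continuous_on {-h..0} a \<and> continuous_on {-h..0} b \<longrightarrow>
         \<bar>Dj f g a b\<bar> \<le> K * pnorm0 h a b) \<and>
     \<comment> \<open>Frechet differentiability of j on U (w.r.t. ||.||_1)\<close>
     (\<forall>(f, g)\<in>U h Rm. \<forall>e>0. \<exists>d>0. \<forall>a b. C1h h a \<and> C1h h b \<and> pnorm1 h a b < d \<longrightarrow>
         ((\<lambda>s. f s + a s), (\<lambda>s. g s + b s)) \<in> U h Rm \<longrightarrow>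
         \<bar>j (\<lambda>s. f s + a s) (\<lambda>s. g s + b s) - j f g - Dj f g a b\<bar> \<le> e * pnorm1 h a b) \<and>
     \<comment> \<open>the derivative U -> L(C^1,R) is continuous (operator norm)\<close>
     (\<forall>(f, g)\<in>U h Rm. \<forall>e>0. \<exists>d>0. \<forall>(f', g')\<in>U h Rm.
         pnorm1 h (\<lambda>s. f' s - f s) (\<lambda>s. g' s - g s) < d \<longrightarrow>
         (\<forall>a b. C1h h a \<and> C1h h b \<longrightarrow> \<bar>Dj f' g' a b - Dj f g a b\<bar> \<le> e * pnorm1 h a b)) \<and>
     \<comment> \<open>(f,g,chi) |-> Dj(f,g) chi continuous on U x C([-h,0],R^2)\<close>
     (\<forall>(f, g)\<in>U h Rm. \<forall>a b. continuous_on {-h..0} a \<and> continuous_on {-h..0} b \<longrightarrow>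
        (\<forall>e>0. \<exists>d>0. \<forall>(f', g')\<in>U h Rm. \<forall>a' b'.
           continuous_on {-h..0} a' \<and> continuous_on {-h..0} b' \<and>
           pnorm1 h (\<lambda>s. f' s - f s) (\<lambda>s. g' s - g s) < d \<and>
           pnorm0 h (\<lambda>s. a' s - a s) (\<lambda>s. b' s - b s) < d \<longrightarrow>
           \<bar>Dj f' g' a' b' - Dj f g a b\<bar> < e)))"

definition j_lipschitz_bounded :: "real \<Rightarrow> ((real \<Rightarrow> real) \<Rightarrow> (real \<Rightarrow> real) \<Rightarrow> real) \<Rightarrow> bool" where
  "j_lipschitz_bounded h j \<longleftrightarrow> (\<forall>B. B \<subseteq> Uplus h \<and> bounded1 h B \<longrightarrow>
     (\<exists>L. \<forall>(f, g)\<in>B. \<forall>(f', g')\<in>B.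
        \<bar>j f g - j f' g'\<bar> \<le> L * pnorm0 h (\<lambda>s. f s - f' s) (\<lambda>s. g s - g' s)))"

definition j_bounded_products :: "real \<Rightarrow> ((real \<Rightarrow> real) \<Rightarrow> (real \<Rightarrow> real) \<Rightarrow> real) \<Rightarrow> bool" where
  "j_bounded_products h j \<longleftrightarrow> (\<forall>B1 B2. B1 \<times> B2 \<subseteq> Uplus h \<and> bounded1s h B1 \<longrightarrow>
     (\<exists>M. \<forall>f\<in>B1. \<forall>g\<in>B2. \<bar>j f g\<bar> \<le> M))"

definition q_bounded_C1 :: "real \<Rightarrow> (real \<Rightarrow> real) \<Rightarrow> bool" where
  "q_bounded_C1 Rm q \<longleftrightarrow> (\<exists>M. \<forall>s\<in>{Rm<..}. \<bar>q s\<bar> \<le> M) \<and>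
     (\<exists>q'. (\<forall>s\<in>{Rm<..}. (q has_real_derivative q' s) (at s)) \<and> continuous_on {Rm<..} q')"

definition is_solution :: "real \<Rightarrow> real \<Rightarrow> (real \<Rightarrow> real) \<Rightarrow> real
    \<Rightarrow> ((real \<Rightarrow> real) \<Rightarrow> (real \<Rightarrow> real) \<Rightarrow> real)
    \<Rightarrow> (real \<Rightarrow> real) \<Rightarrow> (real \<Rightarrow> real) \<Rightarrow> (real \<Rightarrow> real) \<Rightarrow> (real \<Rightarrow> real) \<Rightarrow> bool" where
  "is_solution h Rm q \<mu> j f g w v \<longleftrightarrow>
     (\<forall>s\<in>{-h..0}. w s = f s \<and> v s = g s) \<and>
     (\<forall>t\<ge>0. (seg w t, seg v t) \<in> U h Rm) \<and>
     (\<forall>t\<ge>0. (w has_real_derivative (q (v t) * w t)) (at t within {-h..}) \<and>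
             (v has_real_derivative (j (seg w t) (seg v t) - \<mu> * v t)) (at t within {-h..}))"

end

(*
  Since q <= 0 on [0,oo), w is nonincreasing and tends to some L >= 0.  The w-segments stay
  bounded in C^1, so j is bounded along the solution, and hence so are v and v'.

  If L > 0, then v -> 0: whenever v >= eta, the bound on v' keeps v >= eta/2 for a fixed time
  tau, during which q(v) <= -gamma < 0 damps w by the factor exp(-gamma tau); this cannot
  happen arbitrarily late because w -> L > 0.  But then the segments converge in C to the
  constant (L, 0), so by local Lipschitz continuity j(w_t, v_t) -> j(L, 0) > 0, and
  v' >= j(L,0)/2 - mu v keeps v away from 0, a contradiction.

  Hence L = 0, so j(w_t, v_t) -> 0 by the smallness hypothesis, then v -> 0 by comparison with
  v' <= eps - mu v, and the equations give w', v' -> 0: the segments tend to 0 in C^1.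
*)
theory Submission
  imports Defs "HOL-Real_Asymp.Real_Asymp"
begin

lemma norm0_le:
  assumes "0 \<le> h" and "\<And>s. s \<in> {-h..0} \<Longrightarrow> \<bar>f s\<bar> \<le> e"
  shows "0 \<le> norm0 h f" and "norm0 h f \<le> e"
proof -
  have bdd: "bdd_above ((\<lambda>s. \<bar>f s\<bar>) ` {-h..0})"
    using assms(2) by (intro bdd_aboveI2) auto
  have "\<bar>f 0\<bar> \<le> norm0 h f"
    unfolding norm0_def using assms(1) by (intro cSUP_upper[OF _ bdd]) auto
  then show "0 \<le> norm0 h f" by linarith
  show "norm0 h f \<le> e"
    unfolding norm0_def using assms by (intro cSUP_least) auto
qed

lemma derh_eqI:
  assumes "0 < h" "s \<in> {-h..0}" "(f has_real_derivative d) (at s within {-h..0})"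
  shows "derh h f s = d"
  unfolding derh_def
proof (rule some_equality)
  fix d' assume "(f has_real_derivative d') (at s within {-h..0})"
  with assms show "d' = d"
    using vector_derivative_unique_within_closed_interval[of "-h" 0 s f d' d]
    by (auto simp: has_real_derivative_iff_has_vector_derivative)
qed (fact assms(3))

lemma C1h_const: "C1h h (\<lambda>_. c)"
  unfolding C1h_def by (rule exI[of _ "\<lambda>_. 0"]) auto

lemma derh_seg:
  assumes "0 < h" "s \<in> {-h..0}" "(x has_real_derivative d) (at (t + s))"
  shows "derh h (seg x t) s = d"
proof (rule derh_eqI[OF assms(1,2)])
  have "((\<lambda>s. x (s + t)) has_real_derivative d) (at s)"
    using assms(3) by (simp add: DERIV_shift add.commute)
  then show "(seg x t has_real_derivative d) (at s within {-h..0})"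
    unfolding seg_def by (simp add: add.commute has_field_derivative_at_within)
qed

lemma norm1_seg_le:
  assumes "0 < h"
    and "\<And>s. s \<in> {-h..0} \<Longrightarrow> (x has_real_derivative x' (t + s)) (at (t + s))"
    and "\<And>s. s \<in> {-h..0} \<Longrightarrow> \<bar>x (t + s)\<bar> \<le> A"
    and "\<And>s. s \<in> {-h..0} \<Longrightarrow> \<bar>x' (t + s)\<bar> \<le> B"
  shows "0 \<le> norm1 h (seg x t)" and "norm1 h (seg x t) \<le> A + B"
proof -
  have "\<bar>seg x t s\<bar> \<le> A" "\<bar>derh h (seg x t) s\<bar> \<le> B" if "s \<in> {-h..0}" for s
    using assms(3,4)[OF that] derh_seg[OF assms(1) that assms(2)[OF that]] by (auto simp: seg_def)
  then have "0 \<le> norm0 h (seg x t)" "norm0 h (seg x t) \<le> A"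
    "0 \<le> norm0 h (derh h (seg x t))" "norm0 h (derh h (seg x t)) \<le> B"
    using norm0_le[of h] assms(1) by auto
  then show "0 \<le> norm1 h (seg x t)" "norm1 h (seg x t) \<le> A + B"
    unfolding norm1_def by linarith+
qed

lemma eventually_seg_at_top:
  fixes h :: real
  assumes "eventually P at_top"
  shows "eventually (\<lambda>t. \<forall>s\<in>{-h..0}. P (t + s)) at_top"
proof -
  obtain T where T: "\<forall>t\<ge>T. P t"
    using assms unfolding eventually_at_top_linorder by blast
  have "\<forall>s\<in>{-h..0}. P (t + s)" if "T + h \<le> t" for t
    using T that by auto
  then show ?thesis
    unfolding eventually_at_top_linorder by blast
qed

lemma tendsto_zero_if_eventually_le:
  fixes f :: "'a \<Rightarrow> real"
  assumes "\<And>e. 0 < e \<Longrightarrow> eventually (\<lambda>t. 0 \<le> f t \<and> f t \<le> e) F"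
  shows "(f \<longlongrightarrow> 0) F"
proof (rule decreasing_tendsto)
  show "eventually (\<lambda>t. 0 \<le> f t) F"
    using assms[of 1] by (auto elim: eventually_mono)
next
  fix e :: real assume "0 < e"
  then show "eventually (\<lambda>t. f t < e) F"
    using assms[of "e/2"] by (auto elim: eventually_mono)
qed

lemma norm0_seg_tendsto_zero:
  assumes "0 \<le> h" and "(x \<longlongrightarrow> 0) at_top"
  shows "((\<lambda>t. norm0 h (seg x t)) \<longlongrightarrow> 0) at_top"
proof (rule tendsto_zero_if_eventually_le)
  fix e :: real assume "0 < e"
  with tendsto_rabs_zero[OF assms(2)] have "eventually (\<lambda>t. \<bar>x t\<bar> < e) at_top"
    by (rule order_tendstoD(2))
  then have "eventually (\<lambda>t. \<forall>s\<in>{-h..0}. \<bar>x (t + s)\<bar> < e) at_top"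
    by (rule eventually_seg_at_top)
  then show "eventually (\<lambda>t. 0 \<le> norm0 h (seg x t) \<and> norm0 h (seg x t) \<le> e) at_top"
  proof eventually_elim
    case (elim t)
    then have "\<And>s. s \<in> {-h..0} \<Longrightarrow> \<bar>seg x t s\<bar> \<le> e"
      by (auto simp: seg_def less_imp_le)
    then show ?case
      using norm0_le[OF assms(1)] by blast
  qed
qed

lemma norm1_seg_tendsto_zero:
  assumes "0 < h" and "(x \<longlongrightarrow> 0) at_top" and "(x' \<longlongrightarrow> 0) at_top"
    and "eventually (\<lambda>t. (x has_real_derivative x' t) (at t)) at_top"
  shows "((\<lambda>t. norm1 h (seg x t)) \<longlongrightarrow> 0) at_top"
proof (rule tendsto_zero_if_eventually_le)
  fix e :: real assume "0 < e"
  then have "0 < e/2" by simp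
  then have "eventually (\<lambda>t. \<bar>x t\<bar> < e/2) at_top" "eventually (\<lambda>t. \<bar>x' t\<bar> < e/2) at_top"
    using order_tendstoD(2)[OF tendsto_rabs_zero[OF assms(2)]]
      order_tendstoD(2)[OF tendsto_rabs_zero[OF assms(3)]] by blast+
  with assms(4) have "eventually (\<lambda>t. \<forall>s\<in>{-h..0}.
      (x has_real_derivative x' (t + s)) (at (t + s)) \<and> \<bar>x (t + s)\<bar> < e/2 \<and> \<bar>x' (t + s)\<bar> < e/2) at_top"
    by (intro eventually_seg_at_top) (auto intro: eventually_conj)
  then show "eventually (\<lambda>t. 0 \<le> norm1 h (seg x t) \<and> norm1 h (seg x t) \<le> e) at_top"
  proof eventually_elim
    case (elim t)
    then show ?case
      using norm1_seg_le[OF assms(1), of x x' t "e/2" "e/2"] by (simp add: less_imp_le)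
  qed
qed

lemma differential_inequality_le:
  fixes y y' :: "real \<Rightarrow> real"
  assumes "a \<le> b" and "0 < k"
    and "\<And>t. t \<in> {a..b} \<Longrightarrow> (y has_real_derivative y' t) (at t)"
    and "\<And>t. t \<in> {a..b} \<Longrightarrow> y' t \<le> c - k * y t"
  shows "y b \<le> c / k + (y a - c / k) * exp (- k * (b - a))"
proof -
  define z where "z t = (y t - c / k) * exp (k * t)" for t
  have "z b \<le> z a"
  proof (rule DERIV_nonpos_imp_nonincreasing[OF assms(1)])
    fix t assume "a \<le> t" "t \<le> b"
    then have t: "t \<in> {a..b}" by simp
    have "(z has_real_derivative (y' t - (c - k * y t)) * exp (k * t)) (at t)"
      unfolding z_def using assms(2)
      by (auto intro!: derivative_eq_intros assms(3)[OF t] simp: field_simps)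
    moreover have "(y' t - (c - k * y t)) * exp (k * t) \<le> 0"
      using assms(4)[OF t] by (simp add: mult_nonpos_nonneg)
    ultimately show "\<exists>d. (z has_real_derivative d) (at t) \<and> d \<le> 0" by blast
  qed
  then have "(y b - c / k) * exp (k * b) * exp (- k * b) \<le> (y a - c / k) * exp (k * a) * exp (- k * b)"
    unfolding z_def by (intro mult_right_mono) auto
  then show ?thesis
    by (simp add: mult.assoc flip: exp_add) (simp add: algebra_simps)
qed

lemma eventually_le_of_differential_inequality:
  fixes y y' :: "real \<Rightarrow> real"
  assumes "0 < k" and "0 < \<epsilon>"
    and "eventually (\<lambda>t. (y has_real_derivative y' t) (at t) \<and> y' t \<le> c - k * y t) at_top"
  shows "eventually (\<lambda>t. y t \<le> c / k + \<epsilon>) at_top"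
proof -
  obtain T where T: "\<forall>t\<ge>T. (y has_real_derivative y' t) (at t) \<and> y' t \<le> c - k * y t"
    using assms(3) unfolding eventually_at_top_linorder by blast
  have "((\<lambda>b. (y T - c / k) * exp (- k * (b - T))) \<longlongrightarrow> 0) at_top"
    using \<open>0 < k\<close> by real_asymp
  then have "eventually (\<lambda>b. (y T - c / k) * exp (- k * (b - T)) < \<epsilon>) at_top"
    using \<open>0 < \<epsilon>\<close> by (rule order_tendstoD)
  then show ?thesis
    using eventually_ge_at_top[of T]
  proof eventually_elim
    case (elim b)
    then show ?case
      using differential_inequality_le[OF \<open>T \<le> b\<close> \<open>0 < k\<close>, of y y' c] T by auto
  qed
qed

lemma eventually_ge_of_differential_inequality:
  fixes y y' :: "real \<Rightarrow> real"
  assumes "0 < k" and "0 < \<epsilon>"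
    and "eventually (\<lambda>t. (y has_real_derivative y' t) (at t) \<and> c - k * y t \<le> y' t) at_top"
  shows "eventually (\<lambda>t. c / k - \<epsilon> \<le> y t) at_top"
proof -
  have "eventually (\<lambda>t. ((\<lambda>t. - y t) has_real_derivative - y' t) (at t) \<and> - y' t \<le> - c - k * - y t) at_top"
    using assms(3) by eventually_elim (auto intro: derivative_intros)
  from eventually_le_of_differential_inequality[OF assms(1,2) this]
  show ?thesis by eventually_elim (simp add: algebra_simps)
qed

lemma DERIV_bounded_below_imp_ge:
  fixes f f' :: "real \<Rightarrow> real"
  assumes "a \<le> b"
    and "\<And>t. t \<in> {a..b} \<Longrightarrow> (f has_real_derivative f' t) (at t)"
    and "\<And>t. t \<in> {a..b} \<Longrightarrow> - D \<le> f' t"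
  shows "f a - D * (b - a) \<le> f b"
proof -
  have "f a + D * a \<le> f b + D * b"
  proof (rule DERIV_nonneg_imp_nondecreasing[OF assms(1)])
    fix t assume "a \<le> t" "t \<le> b"
    then have t: "t \<in> {a..b}" by simp
    have "((\<lambda>t. f t + D * t) has_real_derivative f' t + D) (at t)"
      by (auto intro!: derivative_eq_intros assms(2)[OF t])
    then show "\<exists>d. ((\<lambda>t. f t + D * t) has_real_derivative d) (at t) \<and> 0 \<le> d"
      using assms(3)[OF t] by (intro exI[of _ "f' t + D"]) auto
  qed
  then show ?thesis by (simp add: algebra_simps)
qed

(* J stands for the delayed term t |-> j(w_t, v_t). *)
locale damped_system =
  fixes q :: "real \<Rightarrow> real" and \<mu> Mq :: real and J w v :: "real \<Rightarrow> real"
  assumes mu_pos: "0 < \<mu>"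
    and q_neg: "\<And>s. 0 < s \<Longrightarrow> q s < 0"
    and q_cont: "continuous_on {0..} q"
    and q_bounded: "\<And>s. 0 \<le> s \<Longrightarrow> \<bar>q s\<bar> \<le> Mq"
    and w_nonneg: "\<And>t. 0 \<le> t \<Longrightarrow> 0 \<le> w t"
    and v_nonneg: "\<And>t. 0 \<le> t \<Longrightarrow> 0 \<le> v t"
    and J_nonneg: "\<And>t. 0 < t \<Longrightarrow> 0 \<le> J t"
    and w_deriv: "\<And>t. 0 < t \<Longrightarrow> (w has_real_derivative q (v t) * w t) (at t)"
    and v_deriv: "\<And>t. 0 < t \<Longrightarrow> (v has_real_derivative J t - \<mu> * v t) (at t)"
begin

lemma q_nonpos: "0 \<le> s \<Longrightarrow> q s \<le> 0"
proof (cases "s = 0")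
  case True
  have "(q \<longlongrightarrow> q 0) (at_right 0)"
    using q_cont by (metis atLeast_iff at_within_Ici_at_right continuous_on_def order_refl)
  moreover have "eventually (\<lambda>x. q x \<le> 0) (at_right (0::real))"
    using eventually_at_right_less[of "0::real"] by eventually_elim (simp add: q_neg less_imp_le)
  ultimately show ?thesis
    using True by (intro tendsto_upperbound) auto
qed (use q_neg in \<open>auto simp: less_imp_le\<close>)

lemma w_deriv_nonpos: "0 < t \<Longrightarrow> q (v t) * w t \<le> 0"
  using q_nonpos[OF v_nonneg] w_nonneg by (simp add: mult_nonpos_nonneg)

lemma w_antimono:
  assumes "0 < a" and "a \<le> b"
  shows "w b \<le> w a"
proof (rule DERIV_nonpos_imp_nonincreasing[OF assms(2)])
  fix t assume "a \<le> t"
  with assms(1) have "0 < t" by simp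
  then show "\<exists>d. (w has_real_derivative d) (at t) \<and> d \<le> 0"
    using w_deriv w_deriv_nonpos by blast
qed

definition w_inf :: real where
  "w_inf = (INF t\<in>{0<..}. w t)"

lemma bdd_below_w: "bdd_below (w ` {0<..})"
  by (rule bdd_belowI2[of _ 0]) (simp add: w_nonneg)

lemma w_inf_le: "0 < t \<Longrightarrow> w_inf \<le> w t"
  unfolding w_inf_def by (rule cINF_lower[OF bdd_below_w]) simp

lemma w_inf_nonneg: "0 \<le> w_inf"
  unfolding w_inf_def by (rule cINF_greatest) (auto simp: w_nonneg)

lemma w_tendsto_inf: "(w \<longlongrightarrow> w_inf) at_top"
proof (rule decreasing_tendsto)
  show "eventually (\<lambda>t. w_inf \<le> w t) at_top"
    using eventually_gt_at_top[of 0] by eventually_elim (rule w_inf_le)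
next
  fix x assume "w_inf < x"
  moreover have "{0::real<..} \<noteq> {}" by auto
  ultimately obtain T where "0 < T" "w T < x"
    using cINF_less_iff[OF _ bdd_below_w] unfolding w_inf_def by auto
  have "w t < x" if "T \<le> t" for t
    using w_antimono[OF \<open>0 < T\<close> that] \<open>w T < x\<close> by linarith
  then show "eventually (\<lambda>t. w t < x) at_top"
    unfolding eventually_at_top_linorder by blast
qed

lemma Mq_nonneg: "0 \<le> Mq"
  using q_bounded[of 0] by simp

lemma w_eventually_norm1_bounded:
  assumes "0 < h"
  shows "eventually (\<lambda>t. norm1 h (seg w t) \<le> (1 + Mq) * w 1) at_top"
proof -
  have "norm1 h (seg w t) \<le> w 1 + Mq * w 1" if "1 + h \<le> t" for t
  proof (rule norm1_seg_le(2)[OF assms, where x' = "\<lambda>u. q (v u) * w u"])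
    fix s :: real assume "s \<in> {-h..0}"
    with that have s: "1 \<le> t + s" by auto
    then show "(w has_real_derivative q (v (t + s)) * w (t + s)) (at (t + s))"
      using w_deriv by simp
    have w_le: "\<bar>w (t + s)\<bar> \<le> w 1"
      using w_nonneg[of "t + s"] w_antimono[OF _ s] s by simp
    then show "\<bar>w (t + s)\<bar> \<le> w 1" .
    have "\<bar>q (v (t + s)) * w (t + s)\<bar> \<le> Mq * \<bar>w (t + s)\<bar>"
      unfolding abs_mult using s by (intro mult_right_mono q_bounded v_nonneg) auto
    also have "\<dots> \<le> Mq * w 1"
      using w_le Mq_nonneg by (rule mult_left_mono)
    finally show "\<bar>q (v (t + s)) * w (t + s)\<bar> \<le> Mq * w 1" .
  qed
  then show ?thesis
    unfolding eventually_at_top_linorder by (auto simp: algebra_simps)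
qed

lemma v_eventually_le:
  assumes "eventually (\<lambda>t. J t \<le> M) at_top"
  shows "eventually (\<lambda>t. v t \<le> M / \<mu> + 1) at_top"
proof (rule eventually_le_of_differential_inequality[OF mu_pos zero_less_one])
  show "eventually (\<lambda>t. (v has_real_derivative J t - \<mu> * v t) (at t) \<and> J t - \<mu> * v t \<le> M - \<mu> * v t) at_top"
    using eventually_gt_at_top[of 0] assms by eventually_elim (simp add: v_deriv)
qed

lemma v_and_deriv_eventually_bounded:
  assumes "eventually (\<lambda>t. J t \<le> M) at_top"
  obtains V D where "0 < D" and "eventually (\<lambda>t. v t \<le> V \<and> \<bar>J t - \<mu> * v t\<bar> \<le> D) at_top"
proof
  let ?V = "M / \<mu> + 1"
  show "0 < \<bar>M\<bar> + \<mu> * \<bar>?V\<bar> + 1"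
    using mu_pos by (simp add: add_nonneg_pos)
  show "eventually (\<lambda>t. v t \<le> ?V \<and> \<bar>J t - \<mu> * v t\<bar> \<le> \<bar>M\<bar> + \<mu> * \<bar>?V\<bar> + 1) at_top"
    using v_eventually_le[OF assms] assms eventually_gt_at_top[of 0]
  proof eventually_elim
    case (elim t)
    then have "0 \<le> J t" "J t \<le> \<bar>M\<bar>" "0 \<le> \<mu> * v t" "\<mu> * v t \<le> \<mu> * \<bar>?V\<bar>"
      using J_nonneg v_nonneg mu_pos by (auto intro: mult_left_mono)
    with elim show ?case
      unfolding abs_le_iff by (intro conjI; linarith)
  qed
qed

lemma segments_eventually_bounded:
  assumes "0 < h" and "eventually (\<lambda>t. J t \<le> M) at_top"
  obtains K where "eventually (\<lambda>t. pnorm1 h (seg w t) (seg v t) \<le> K) at_top"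
proof -
  obtain V D where "0 < D" and VD: "eventually (\<lambda>t. v t \<le> V \<and> \<bar>J t - \<mu> * v t\<bar> \<le> D) at_top"
    using v_and_deriv_eventually_bounded[OF assms(2)] .
  have "eventually (\<lambda>t. \<forall>s\<in>{-h..0}. 0 < t + s \<and> v (t + s) \<le> V \<and> \<bar>J (t + s) - \<mu> * v (t + s)\<bar> \<le> D) at_top"
    by (rule eventually_seg_at_top) (use VD eventually_gt_at_top[of 0] in \<open>eventually_elim, simp\<close>)
  then have "eventually (\<lambda>t. norm1 h (seg v t) \<le> \<bar>V\<bar> + D) at_top"
  proof eventually_elim
    case (elim t)
    show ?case
    proof (rule norm1_seg_le(2)[OF assms(1), where x' = "\<lambda>u. J u - \<mu> * v u"])
      fix s assume "s \<in> {-h..0}"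
      with elim have "0 < t + s" "v (t + s) \<le> V" "\<bar>J (t + s) - \<mu> * v (t + s)\<bar> \<le> D"
        by auto
      then show "(v has_real_derivative J (t + s) - \<mu> * v (t + s)) (at (t + s))"
        and "\<bar>v (t + s)\<bar> \<le> \<bar>V\<bar>" and "\<bar>J (t + s) - \<mu> * v (t + s)\<bar> \<le> D"
        using v_deriv v_nonneg[of "t + s"] by auto
    qed
  qed
  with w_eventually_norm1_bounded[OF assms(1)]
  have "eventually (\<lambda>t. pnorm1 h (seg w t) (seg v t) \<le> max ((1 + Mq) * w 1) (\<bar>V\<bar> + D)) at_top"
    by eventually_elim (auto simp: pnorm1_def)
  then show ?thesis by (rule that)
qed

lemma w_decay:
  assumes "0 < t" and "0 \<le> \<tau>" and "0 < \<gamma>"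
    and "\<And>s. s \<in> {t..t + \<tau>} \<Longrightarrow> q (v s) \<le> - \<gamma>"
  shows "w (t + \<tau>) \<le> w t * exp (- \<gamma> * \<tau>)"
proof -
  have "w (t + \<tau>) \<le> 0 / \<gamma> + (w t - 0 / \<gamma>) * exp (- \<gamma> * (t + \<tau> - t))"
  proof (rule differential_inequality_le[where y' = "\<lambda>s. q (v s) * w s"])
    fix s assume s: "s \<in> {t..t + \<tau>}"
    with assms(1) show "(w has_real_derivative q (v s) * w s) (at s)"
      by (intro w_deriv) auto
    have "q (v s) * w s \<le> - \<gamma> * w s"
      using assms(1) assms(4)[OF s] s w_nonneg[of s] by (intro mult_right_mono) auto
    then show "q (v s) * w s \<le> 0 - \<gamma> * w s" by simp
  qed (use assms in auto)
  then show ?thesis by simp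
qed

lemma q_uniformly_negative:
  assumes "0 < a" and "a \<le> b"
  obtains \<gamma> where "0 < \<gamma>" and "\<And>y. y \<in> {a..b} \<Longrightarrow> q y \<le> - \<gamma>"
proof -
  obtain z where z: "z \<in> {a..b}" "\<forall>y\<in>{a..b}. q y \<le> q z"
    using continuous_attains_sup[of "{a..b}" q] continuous_on_subset[OF q_cont, of "{a..b}"] assms
    by auto
  show ?thesis
    using z assms(1) q_neg[of z] by (intro that[of "- q z"]) auto
qed

lemma v_lower_bound_from_deriv_bound:
  assumes "0 < t" and "t \<le> s" and "\<And>u. t \<le> u \<Longrightarrow> \<bar>J u - \<mu> * v u\<bar> \<le> D"
  shows "v t - D * (s - t) \<le> v s"
proof (rule DERIV_bounded_below_imp_ge[OF assms(2), where f' = "\<lambda>u. J u - \<mu> * v u"])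
  fix u assume "u \<in> {t..s}"
  with assms(1) assms(3)[of u] show "(v has_real_derivative J u - \<mu> * v u) (at u)"
    and "- D \<le> J u - \<mu> * v u"
    by (auto intro: v_deriv)
qed

lemma w_decays_after_v_large:
  assumes "0 < t" and "0 < D" and "0 < \<gamma>" and "0 < \<eta>" and "\<eta> \<le> v t"
    and \<gamma>: "\<And>y. y \<in> {\<eta>/2..V} \<Longrightarrow> q y \<le> - \<gamma>"
    and late: "\<And>s. t \<le> s \<Longrightarrow> v s \<le> V" "\<And>s. t \<le> s \<Longrightarrow> \<bar>J s - \<mu> * v s\<bar> \<le> D"
  shows "w (t + \<eta> / (2 * D)) \<le> w t * exp (- \<gamma> * (\<eta> / (2 * D)))"
proof (rule w_decay[OF assms(1) _ assms(3)])
  show "0 \<le> \<eta> / (2 * D)"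
    using assms(2,4) by simp
  fix s assume s: "s \<in> {t..t + \<eta> / (2 * D)}"
  show "q (v s) \<le> - \<gamma>"
  proof (rule \<gamma>)
    have "v t - D * (s - t) \<le> v s"
      using s by (intro v_lower_bound_from_deriv_bound[OF assms(1) _ late(2)]) auto
    moreover have "D * (s - t) \<le> D * (\<eta> / (2 * D))"
      using s \<open>0 < D\<close> by (intro mult_left_mono) auto
    ultimately show "v s \<in> {\<eta>/2..V}"
      using s assms(2,5) late(1)[of s] by auto
  qed
qed

lemma v_tendsto_zero_if_w_inf_pos:
  assumes "0 < w_inf" and "eventually (\<lambda>t. J t \<le> M) at_top"
  shows "(v \<longlongrightarrow> 0) at_top"
proof (rule decreasing_tendsto)
  show "eventually (\<lambda>t. 0 \<le> v t) at_top"
    using eventually_ge_at_top[of 0] by eventually_elim (rule v_nonneg)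
next
  fix \<eta> :: real assume "0 < \<eta>"
  obtain V D where "0 < D" and VD: "eventually (\<lambda>t. v t \<le> V \<and> \<bar>J t - \<mu> * v t\<bar> \<le> D) at_top"
    using v_and_deriv_eventually_bounded[OF assms(2)] .
  show "eventually (\<lambda>t. v t < \<eta>) at_top"
  proof (rule ccontr)
    assume "\<not> eventually (\<lambda>t. v t < \<eta>) at_top"
    then have often: "frequently (\<lambda>t. \<eta> \<le> v t) at_top"
      by (simp add: not_eventually not_less)
    then have "\<eta> \<le> V"
      using frequently_eventually_frequently[OF often VD] by (auto elim: frequentlyE)
    then obtain \<gamma> where "0 < \<gamma>" and \<gamma>: "\<And>y. y \<in> {\<eta>/2..V} \<Longrightarrow> q y \<le> - \<gamma>"
      using q_uniformly_negative[of "\<eta>/2" V] \<open>0 < \<eta>\<close> by auto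
    define \<tau> where "\<tau> = \<eta> / (2 * D)"
    have "0 < \<tau>"
      using \<open>0 < \<eta>\<close> \<open>0 < D\<close> by (simp add: \<tau>_def)
    have "w_inf < w_inf * exp (\<gamma> * \<tau>)"
      using assms(1) \<open>0 < \<gamma>\<close> \<open>0 < \<tau>\<close> by simp
    with w_tendsto_inf have "eventually (\<lambda>t. w t < w_inf * exp (\<gamma> * \<tau>)) at_top"
      by (rule order_tendstoD)
    with eventually_all_ge_at_top[OF eventually_conj[OF eventually_gt_at_top[of 0] VD]]
    have "eventually (\<lambda>t. w t < w_inf * exp (\<gamma> * \<tau>) \<and>
        (\<forall>s\<ge>t. 0 < s \<and> v s \<le> V \<and> \<bar>J s - \<mu> * v s\<bar> \<le> D)) at_top"
      by eventually_elim blast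
    from frequently_eventually_frequently[OF often this]
    obtain t where t: "0 < t" "\<eta> \<le> v t" "w t < w_inf * exp (\<gamma> * \<tau>)"
      and late: "\<And>s. t \<le> s \<Longrightarrow> v s \<le> V" "\<And>s. t \<le> s \<Longrightarrow> \<bar>J s - \<mu> * v s\<bar> \<le> D"
      by (elim frequentlyE) auto
    have "w (t + \<tau>) \<le> w t * exp (- \<gamma> * \<tau>)"
      unfolding \<tau>_def using w_decays_after_v_large[OF t(1) \<open>0 < D\<close> \<open>0 < \<gamma>\<close> \<open>0 < \<eta>\<close> t(2) \<gamma> late] .
    also have "\<dots> < w_inf * exp (\<gamma> * \<tau>) * exp (- \<gamma> * \<tau>)"
      using t(3) by (rule mult_strict_right_mono) simp
    also have "\<dots> = w_inf"
      by (simp add: mult.assoc flip: exp_add)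
    finally show False
      using w_inf_le[of "t + \<tau>"] t(1) \<open>0 < \<tau>\<close> by simp
  qed
qed

lemma v_not_tendsto_zero:
  assumes "0 < c" and "(J \<longlongrightarrow> c) at_top"
  shows "\<not> (v \<longlongrightarrow> 0) at_top"
proof
  assume "(v \<longlongrightarrow> 0) at_top"
  then have "eventually (\<lambda>t. v t < c / (4 * \<mu>)) at_top"
    using assms(1) mu_pos by (intro order_tendstoD) auto
  moreover have "eventually (\<lambda>t. (c / 2) / \<mu> - c / (4 * \<mu>) \<le> v t) at_top"
  proof (rule eventually_ge_of_differential_inequality[OF mu_pos])
    show "0 < c / (4 * \<mu>)"
      using assms(1) mu_pos by simp
    have "eventually (\<lambda>t. c / 2 < J t) at_top"
      using assms by (intro order_tendstoD) auto
    then show "eventually (\<lambda>t. (v has_real_derivative J t - \<mu> * v t) (at t)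
        \<and> c / 2 - \<mu> * v t \<le> J t - \<mu> * v t) at_top"
      using eventually_gt_at_top[of 0] by eventually_elim (simp add: v_deriv)
  qed
  ultimately have "eventually (\<lambda>t. v t < c / (4 * \<mu>) \<and> (c / 2) / \<mu> - c / (4 * \<mu>) \<le> v t) at_top"
    by (rule eventually_conj)
  then obtain t where "v t < c / (4 * \<mu>)" "(c / 2) / \<mu> - c / (4 * \<mu>) \<le> v t"
    by (auto dest: eventually_happens)
  moreover have "(c / 2) / \<mu> - c / (4 * \<mu>) = c / (4 * \<mu>)"
    by (simp add: field_simps)
  ultimately show False by linarith
qed

lemma w_inf_eq_zero:
  assumes "eventually (\<lambda>t. J t \<le> M) at_top"
    and "0 < w_inf \<Longrightarrow> (v \<longlongrightarrow> 0) at_top \<Longrightarrow> \<exists>c>0. (J \<longlongrightarrow> c) at_top"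
  shows "w_inf = 0"
proof (rule ccontr)
  assume "w_inf \<noteq> 0"
  with w_inf_nonneg have "0 < w_inf" by simp
  then have "(v \<longlongrightarrow> 0) at_top"
    using v_tendsto_zero_if_w_inf_pos assms(1) by blast
  with assms(2) \<open>0 < w_inf\<close> v_not_tendsto_zero show False
    by blast
qed

lemma v_tendsto_zero_if_J_tendsto_zero:
  assumes "(J \<longlongrightarrow> 0) at_top"
  shows "(v \<longlongrightarrow> 0) at_top"
proof (rule decreasing_tendsto)
  show "eventually (\<lambda>t. 0 \<le> v t) at_top"
    using eventually_ge_at_top[of 0] by eventually_elim (rule v_nonneg)
next
  fix e :: real assume "0 < e"
  then have "eventually (\<lambda>t. J t < \<mu> * e / 2) at_top"
    using mu_pos by (intro order_tendstoD(2)[OF assms]) simp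
  then have "eventually (\<lambda>t. (v has_real_derivative J t - \<mu> * v t) (at t) \<and> J t - \<mu> * v t \<le> \<mu> * e / 2 - \<mu> * v t) at_top"
    using eventually_gt_at_top[of 0] by eventually_elim (simp add: v_deriv)
  from eventually_le_of_differential_inequality[OF mu_pos _ this, of "e / 4"] \<open>0 < e\<close>
  have "eventually (\<lambda>t. v t \<le> e / 2 + e / 4) at_top"
    using mu_pos by simp
  then show "eventually (\<lambda>t. v t < e) at_top"
    by eventually_elim (use \<open>0 < e\<close> in simp)
qed

lemma segment_norms_tendsto_zero:
  assumes "0 < h" and "(w \<longlongrightarrow> 0) at_top" and "(J \<longlongrightarrow> 0) at_top"
  shows "((\<lambda>t. pnorm0 h (seg w t) (seg v t)) \<longlongrightarrow> 0) at_top"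
    and "((\<lambda>t. pnorm1 h (seg w t) (seg v t)) \<longlongrightarrow> 0) at_top"
proof -
  have v_lim: "(v \<longlongrightarrow> 0) at_top"
    using assms(3) by (rule v_tendsto_zero_if_J_tendsto_zero)
  have w'_lim: "((\<lambda>t. q (v t) * w t) \<longlongrightarrow> 0) at_top"
  proof (rule Lim_null_comparison)
    show "eventually (\<lambda>t. norm (q (v t) * w t) \<le> Mq * \<bar>w t\<bar>) at_top"
      using eventually_ge_at_top[of 0]
      by eventually_elim (auto simp: abs_mult intro!: mult_right_mono q_bounded v_nonneg)
    show "((\<lambda>t. Mq * \<bar>w t\<bar>) \<longlongrightarrow> 0) at_top"
      using tendsto_mult_right_zero[OF tendsto_rabs_zero[OF assms(2)]] .
  qed
  have v'_lim: "((\<lambda>t. J t - \<mu> * v t) \<longlongrightarrow> 0) at_top"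
    using tendsto_diff[OF assms(3) tendsto_mult_right_zero[OF v_lim]] by simp
  have "eventually (\<lambda>t. (w has_real_derivative q (v t) * w t) (at t)) at_top"
    using eventually_gt_at_top[of 0] by eventually_elim (rule w_deriv)
  moreover have "eventually (\<lambda>t. (v has_real_derivative J t - \<mu> * v t) (at t)) at_top"
    using eventually_gt_at_top[of 0] by eventually_elim (rule v_deriv)
  ultimately have norm1_lims: "((\<lambda>t. norm1 h (seg w t)) \<longlongrightarrow> 0) at_top"
    "((\<lambda>t. norm1 h (seg v t)) \<longlongrightarrow> 0) at_top"
    using norm1_seg_tendsto_zero[OF assms(1)] assms(2) w'_lim v_lim v'_lim by blast+
  show "((\<lambda>t. pnorm0 h (seg w t) (seg v t)) \<longlongrightarrow> 0) at_top"
    unfolding pnorm0_def using tendsto_max[OF norm0_seg_tendsto_zero norm0_seg_tendsto_zero]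
      assms(1,2) v_lim by fastforce
  show "((\<lambda>t. pnorm1 h (seg w t) (seg v t)) \<longlongrightarrow> 0) at_top"
    unfolding pnorm1_def using tendsto_max[OF norm1_lims] by simp
qed

end

lemma j_eventually_bounded_along:
  fixes x y :: "real \<Rightarrow> real \<Rightarrow> real"
  assumes "j_bounded_products h j"
    and "\<And>t t'. T \<le> t \<Longrightarrow> T \<le> t' \<Longrightarrow> (x t, y t') \<in> Uplus h"
    and "eventually (\<lambda>t. norm1 h (x t) \<le> K) at_top"
  obtains M where "eventually (\<lambda>t. j (x t) (y t) \<le> M) at_top"
proof -
  obtain T' where T': "\<forall>t\<ge>T'. norm1 h (x t) \<le> K"
    using assms(3) unfolding eventually_at_top_linorder by blast
  let ?S = "{max T T'..}"
  have "x ` ?S \<times> y ` ?S \<subseteq> Uplus h"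
    using assms(2) by auto
  moreover have "bounded1s h (x ` ?S)"
    unfolding bounded1s_def using T' by (intro exI[of _ K]) auto
  ultimately obtain M where "\<forall>a\<in>x ` ?S. \<forall>b\<in>y ` ?S. \<bar>j a b\<bar> \<le> M"
    using assms(1) unfolding j_bounded_products_def by blast
  then have "\<forall>t\<ge>max T T'. j (x t) (y t) \<le> M"
    by (auto simp: abs_le_iff)
  then show ?thesis
    using that unfolding eventually_at_top_linorder by blast
qed

lemma j_tendsto_along_lipschitz:
  fixes x y :: "real \<Rightarrow> real \<Rightarrow> real"
  assumes "j_lipschitz_bounded h j" and "(a, b) \<in> Uplus h"
    and "eventually (\<lambda>t. (x t, y t) \<in> Uplus h \<and> pnorm1 h (x t) (y t) \<le> K) at_top"
    and "((\<lambda>t. pnorm0 h (\<lambda>s. x t s - a s) (\<lambda>s. y t s - b s)) \<longlongrightarrow> 0) at_top"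
  shows "((\<lambda>t. j (x t) (y t)) \<longlongrightarrow> j a b) at_top"
proof -
  obtain T where T: "\<forall>t\<ge>T. (x t, y t) \<in> Uplus h \<and> pnorm1 h (x t) (y t) \<le> K"
    using assms(3) unfolding eventually_at_top_linorder by blast
  define B where "B = insert (a, b) ((\<lambda>t. (x t, y t)) ` {T..})"
  have "B \<subseteq> Uplus h"
    using T assms(2) by (auto simp: B_def)
  moreover have "bounded1 h B"
    unfolding bounded1_def B_def using T by (intro exI[of _ "max K (pnorm1 h a b)"]) auto
  ultimately obtain L where L: "\<forall>(f, g)\<in>B. \<forall>(f', g')\<in>B.
      \<bar>j f g - j f' g'\<bar> \<le> L * pnorm0 h (\<lambda>s. f s - f' s) (\<lambda>s. g s - g' s)"
    using assms(1) unfolding j_lipschitz_bounded_def by blast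
  have "((\<lambda>t. j (x t) (y t) - j a b) \<longlongrightarrow> 0) at_top"
  proof (rule Lim_null_comparison)
    have "norm (j (x t) (y t) - j a b) \<le> L * pnorm0 h (\<lambda>s. x t s - a s) (\<lambda>s. y t s - b s)"
      if "T \<le> t" for t
    proof -
      have "(x t, y t) \<in> B" "(a, b) \<in> B"
        using that by (auto simp: B_def)
      then show ?thesis
        using L by fastforce
    qed
    then show "eventually (\<lambda>t. norm (j (x t) (y t) - j a b)
        \<le> L * pnorm0 h (\<lambda>s. x t s - a s) (\<lambda>s. y t s - b s)) at_top"
      unfolding eventually_at_top_linorder by blast
    show "((\<lambda>t. L * pnorm0 h (\<lambda>s. x t s - a s) (\<lambda>s. y t s - b s)) \<longlongrightarrow> 0) at_top"
      using tendsto_mult_right_zero[OF assms(4)] .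
  qed
  then show ?thesis
    by (rule LIM_zero_cancel)
qed

lemma j_seg_tendsto_const:
  assumes "j_lipschitz_bounded h j" and "0 \<le> h" and "0 \<le> c"
    and "eventually (\<lambda>t. (seg w t, seg v t) \<in> Uplus h) at_top"
    and "eventually (\<lambda>t. pnorm1 h (seg w t) (seg v t) \<le> K) at_top"
    and "(w \<longlongrightarrow> c) at_top" and "(v \<longlongrightarrow> 0) at_top"
  shows "((\<lambda>t. j (seg w t) (seg v t)) \<longlongrightarrow> j (\<lambda>_. c) (\<lambda>_. 0)) at_top"
proof (rule j_tendsto_along_lipschitz[OF assms(1) _ eventually_conj[OF assms(4,5)]])
  show "((\<lambda>_. c), (\<lambda>_. 0)) \<in> Uplus h"
    using assms(3) by (simp add: Uplus_def C1h_const)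
  show "((\<lambda>t. pnorm0 h (\<lambda>s. seg w t s - c) (\<lambda>s. seg v t s - 0)) \<longlongrightarrow> 0) at_top"
    using tendsto_max[OF norm0_seg_tendsto_zero[OF assms(2) LIM_zero[OF assms(6)]]
        norm0_seg_tendsto_zero[OF assms(2,7)]]
    by (simp add: pnorm0_def seg_def)
qed

lemma j_tendsto_zero_along:
  fixes x y :: "real \<Rightarrow> real \<Rightarrow> real"
    and j :: "(real \<Rightarrow> real) \<Rightarrow> (real \<Rightarrow> real) \<Rightarrow> real"
  assumes "\<forall>\<epsilon>>0. \<exists>\<delta>>0. \<forall>(a, b)\<in>Uplus h. norm0 h a \<le> \<delta> \<longrightarrow> j a b \<le> \<epsilon>"
    and "\<forall>(a, b)\<in>Uplus h. 0 \<le> j a b"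
    and "eventually (\<lambda>t. (x t, y t) \<in> Uplus h) at_top"
    and "((\<lambda>t. norm0 h (x t)) \<longlongrightarrow> 0) at_top"
  shows "((\<lambda>t. j (x t) (y t)) \<longlongrightarrow> 0) at_top"
proof (rule decreasing_tendsto)
  show "eventually (\<lambda>t. 0 \<le> j (x t) (y t)) at_top"
    using assms(3) by eventually_elim (use assms(2) in auto)
next
  fix \<epsilon> :: real assume "0 < \<epsilon>"
  then obtain \<delta> where "0 < \<delta>" and \<delta>: "\<forall>(a, b)\<in>Uplus h. norm0 h a \<le> \<delta> \<longrightarrow> j a b \<le> \<epsilon> / 2"
    using assms(1) half_gt_zero by blast
  have "eventually (\<lambda>t. norm0 h (x t) < \<delta>) at_top"
    using order_tendstoD(2)[OF assms(4) \<open>0 < \<delta>\<close>] .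
  with assms(3) show "eventually (\<lambda>t. j (x t) (y t) < \<epsilon>) at_top"
  proof eventually_elim
    case (elim t)
    then have "j (x t) (y t) \<le> \<epsilon> / 2"
      using \<delta> by auto
    with \<open>0 < \<epsilon>\<close> show ?case by linarith
  qed
qed

lemma seg_solution_in_Uplus:
  assumes "is_solution h Rm q \<mu> j f g w v" and "\<forall>t\<ge>-h. 0 \<le> w t \<and> 0 \<le> v t"
    and "0 \<le> t" and "0 \<le> t'"
  shows "(seg w t, seg v t') \<in> Uplus h"
proof -
  have "(seg w t, seg v t) \<in> U h Rm" "(seg w t', seg v t') \<in> U h Rm"
    using assms(1,3,4) unfolding is_solution_def by auto
  then have "C1h h (seg w t)" "C1h h (seg v t')"
    by (auto simp: U_def)
  moreover have "0 \<le> seg w t s \<and> 0 \<le> seg v t' s" if "s \<in> {-h..0}" for s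
    using assms(2) assms(3,4) that by (auto simp: seg_def)
  ultimately show ?thesis
    by (auto simp: Uplus_def)
qed

lemma damped_system_of_solution:
  assumes "0 < h" and "Rm < 0" and "0 < \<mu>" and "q_bounded_C1 Rm q" and "\<forall>s>0. q s < 0"
    and "\<forall>(a, b)\<in>Uplus h. 0 \<le> j a b"
    and sol: "is_solution h Rm q \<mu> j f g w v" and nonneg: "\<forall>t\<ge>-h. 0 \<le> w t \<and> 0 \<le> v t"
  obtains Mq where "damped_system q \<mu> Mq (\<lambda>t. j (seg w t) (seg v t)) w v"
proof -
  obtain Mq q' where Mq: "\<forall>s\<in>{Rm<..}. \<bar>q s\<bar> \<le> Mq"
    and q': "\<forall>s\<in>{Rm<..}. (q has_real_derivative q' s) (at s)"
    using assms(4) unfolding q_bounded_C1_def by blast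
  have at_interior: "at t within {-h..} = at t" if "0 < t" for t
    using assms(1) that by (intro at_within_interior) auto
  show ?thesis
  proof (rule that, unfold_locales)
    show "0 < \<mu>" by fact
    show "q s < 0" if "0 < s" for s
      using assms(5) that by blast
    show "continuous_on {0..} q"
      using q' assms(2) by (intro continuous_at_imp_continuous_on) (auto intro: DERIV_isCont)
    show "\<bar>q s\<bar> \<le> Mq" if "0 \<le> s" for s
      using Mq assms(2) that by auto
    show "0 \<le> w t" and "0 \<le> v t" if "0 \<le> t" for t
      using nonneg assms(1) that by auto
    show "0 \<le> j (seg w t) (seg v t)" if "0 < t" for t
      using seg_solution_in_Uplus[OF sol nonneg, of t t] assms(6) that by auto
    show "(w has_real_derivative q (v t) * w t) (at t)"
      and "(v has_real_derivative j (seg w t) (seg v t) - \<mu> * v t) (at t)" if "0 < t" for t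
    proof -
      have "(w has_real_derivative q (v t) * w t) (at t within {-h..})
          \<and> (v has_real_derivative j (seg w t) (seg v t) - \<mu> * v t) (at t within {-h..})"
        using sol that unfolding is_solution_def by auto
      then show "(w has_real_derivative q (v t) * w t) (at t)"
        and "(v has_real_derivative j (seg w t) (seg v t) - \<mu> * v t) (at t)"
        by (simp_all add: at_interior[OF that])
    qed
  qed
qed

theorem proposition2:
  fixes h Rm \<mu> :: real
    and q :: "real \<Rightarrow> real"
    and j :: "(real \<Rightarrow> real) \<Rightarrow> (real \<Rightarrow> real) \<Rightarrow> real"
    and f g w v :: "real \<Rightarrow> real"
  assumes h_pos: "h > 0" and Rm_neg: "Rm < 0" and mu_pos: "\<mu> > 0"
    and j_ext: "j_extensional h j"
    and j_C1: "j_C1_ext h Rm j"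
    and j_lip: "j_lipschitz_bounded h j"
    and j_nonneg: "\<forall>(a, b)\<in>Uplus h. j a b \<ge> 0"
    and j_bdd: "j_bounded_products h j"
    and q_reg: "q_bounded_C1 Rm q"
    and q_neg: "\<forall>s>0. q s < 0"
    and X_ne: "Xplus h Rm q \<mu> j \<noteq> {}"
    and glob_ex: "\<forall>(a, b)\<in>Xplus h Rm q \<mu> j. \<exists>w' v'. is_solution h Rm q \<mu> j a b w' v'"
    and glob_nonneg: "\<forall>(a, b)\<in>Xplus h Rm q \<mu> j. \<forall>w' v'. is_solution h Rm q \<mu> j a b w' v' \<longrightarrow>
                         (\<forall>t\<ge>-h. w' t \<ge> 0 \<and> v' t \<ge> 0)"
    and small: "\<forall>\<epsilon>>0. \<exists>\<delta>>0. \<forall>(a, b)\<in>Uplus h. norm0 h a \<le> \<delta> \<longrightarrow> j a b \<le> \<epsilon>"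
    and const_pos: "\<forall>c>0. j (\<lambda>_. c) (\<lambda>_. 0) > 0"
    and init: "(f, g) \<in> Xplus h Rm q \<mu> j"
    and sol: "is_solution h Rm q \<mu> j f g w v"
  shows "((\<lambda>t. pnorm0 h (seg w t) (seg v t)) \<longlongrightarrow> 0) at_top
         \<and> ((\<lambda>t. pnorm1 h (seg w t) (seg v t)) \<longlongrightarrow> 0) at_top"
proof -
  let ?J = "\<lambda>t. j (seg w t) (seg v t)"
  have nonneg: "\<forall>t\<ge>-h. 0 \<le> w t \<and> 0 \<le> v t"
    using glob_nonneg init sol by blast
  note in_Uplus = seg_solution_in_Uplus[OF sol nonneg]
  obtain Mq where "damped_system q \<mu> Mq ?J w v"
    using damped_system_of_solution[OF h_pos Rm_neg mu_pos q_reg q_neg j_nonneg sol nonneg] .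
  then interpret damped_system q \<mu> Mq ?J w v .
  obtain M where J_bdd: "eventually (\<lambda>t. ?J t \<le> M) at_top"
    using j_eventually_bounded_along[OF j_bdd in_Uplus w_eventually_norm1_bounded[OF h_pos]] .
  have seg_Uplus: "eventually (\<lambda>t. (seg w t, seg v t) \<in> Uplus h) at_top"
    using eventually_ge_at_top[of 0] by eventually_elim (rule in_Uplus)
  obtain K where seg_bdd: "eventually (\<lambda>t. pnorm1 h (seg w t) (seg v t) \<le> K) at_top"
    using segments_eventually_bounded[OF h_pos J_bdd] .
  have "w_inf = 0"
  proof (rule w_inf_eq_zero[OF J_bdd])
    assume "0 < w_inf" and "(v \<longlongrightarrow> 0) at_top"
    then have "(?J \<longlongrightarrow> j (\<lambda>_. w_inf) (\<lambda>_. 0)) at_top"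
      using j_seg_tendsto_const[OF j_lip _ _ seg_Uplus seg_bdd w_tendsto_inf] h_pos by simp
    moreover have "0 < j (\<lambda>_. w_inf) (\<lambda>_. 0)"
      using const_pos \<open>0 < w_inf\<close> by blast
    ultimately show "\<exists>c>0. (?J \<longlongrightarrow> c) at_top"
      by blast
  qed
  then have w_lim: "(w \<longlongrightarrow> 0) at_top"
    using w_tendsto_inf by simp
  have "(?J \<longlongrightarrow> 0) at_top"
    using j_tendsto_zero_along[OF small j_nonneg seg_Uplus norm0_seg_tendsto_zero[OF _ w_lim]] h_pos
    by simp
  with segment_norms_tendsto_zero[OF h_pos w_lim] show ?thesis
    by blast
qed

end
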